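(* Let $\Phi$ be an irreducible root system with ambient real vector space $\mathbb R\Phi$. Then $\Phi$ is not contained in the union of two hyperplanes (linear subspaces of codimension $1$) of $\mathbb R\Phi$. Moreover, if $H\le\mathbb R\Phi$ is a hyperplane and $\alpha\in\Phi\cap H$, then $\alpha$ has a neighbor in $\Phi\setminus H$.
   Context: Root systems are crystallographic, possibly non-reduced (components of type $\mathsf{BC}_\ell$ are allowed). Two roots $\alpha,\beta$ are called neighbors if they are linearly independent, non-orthogonal, and no root lies in the open cone $\mathbb R_{>0}\alpha+\mathbb R_{>0}\beta$. *)

theory Defs
  imports "HOL-Analysis.Analysis"
begin

text \<open>Roots live in a Euclidean space 'a; the ambient space of Phi is span Phi.
  Crystallographic, possibly non-reduced root systems (no condition on multiples).\<close>

definition refl_root :: "'a::euclidean_space \<Rightarrow> 'a \<Rightarrow> 'a" where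
  "refl_root \<alpha> x = x - (2 * (x \<bullet> \<alpha>) / (\<alpha> \<bullet> \<alpha>)) *\<^sub>R \<alpha>"

definition root_system :: "'a::euclidean_space set \<Rightarrow> bool" where
  "root_system \<Phi> \<longleftrightarrow> finite \<Phi> \<and> 0 \<notin> \<Phi> \<and>
     (\<forall>\<alpha>\<in>\<Phi>. \<forall>\<beta>\<in>\<Phi>. refl_root \<alpha> \<beta> \<in> \<Phi>) \<and>
     (\<forall>\<alpha>\<in>\<Phi>. \<forall>\<beta>\<in>\<Phi>. 2 * (\<beta> \<bullet> \<alpha>) / (\<alpha> \<bullet> \<alpha>) \<in> \<int>)"

definition irreducible_rs :: "'a::euclidean_space set \<Rightarrow> bool" where
  "irreducible_rs \<Phi> \<longleftrightarrow> \<Phi> \<noteq> {} \<and>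
     \<not> (\<exists>A B. A \<noteq> {} \<and> B \<noteq> {} \<and> A \<union> B = \<Phi> \<and> A \<inter> B = {} \<and>
            (\<forall>a\<in>A. \<forall>b\<in>B. a \<bullet> b = 0))"

definition hyperplane_of :: "'a::euclidean_space set \<Rightarrow> 'a set \<Rightarrow> bool" where
  "hyperplane_of V H \<longleftrightarrow> subspace H \<and> H \<subseteq> V \<and> dim H + 1 = dim V"

definition root_neighbors :: "'a::euclidean_space set \<Rightarrow> 'a \<Rightarrow> 'a \<Rightarrow> bool" where
  "root_neighbors \<Phi> \<alpha> \<beta> \<longleftrightarrow> \<alpha> \<noteq> \<beta> \<and> independent {\<alpha>, \<beta>} \<and> \<alpha> \<bullet> \<beta> \<noteq> 0 \<and>
     \<not> (\<exists>\<gamma>\<in>\<Phi>. \<exists>a b. a > 0 \<and> b > 0 \<and> \<gamma> = a *\<^sub>R \<alpha> + b *\<^sub>R \<beta>)"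

end

theory Submission imports Defs begin

text \<open>
  If \<open>\<Phi> \<subseteq> H\<^sub>1 \<union> H\<^sub>2\<close> and \<open>\<alpha> \<in> \<Phi> - H\<^sub>1\<close>, \<open>\<beta> \<in> \<Phi> - H\<^sub>2\<close>, then
  \<open>\<alpha> \<bottom> \<beta>\<close>: otherwise the reflection \<open>s\<^sub>\<alpha> \<beta>\<close> would lie in neither subspace.
  A root that is not orthogonal to some root outside \<open>H\<^sub>1\<close> lies in the span \<open>L\<close> of
  \<open>\<Phi> - H\<^sub>1\<close>, so by irreducibility \<open>\<Phi> \<subseteq> L\<close>; but \<open>\<beta> \<bottom> L\<close>, a contradiction.
  For the second claim, apply the first to \<open>H\<close> and \<open>\<alpha>\<^sup>\<bottom>\<close> to get a root \<open>\<beta> \<notin> H\<close>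
  with \<open>\<alpha> \<bullet> \<beta> \<noteq> 0\<close>. Among the roots \<open>x\<alpha> + y\<beta>\<close> with \<open>y > 0\<close> the one maximising
  \<open>x / y\<close> bounds an open cone free of roots together with \<open>\<alpha>\<close>, and it is not in \<open>H\<close>.
\<close>

lemma root_system_refl_root_mem:
  assumes "root_system \<Phi>" "\<alpha> \<in> \<Phi>" "\<beta> \<in> \<Phi>"
  shows "\<beta> - (2 * (\<beta> \<bullet> \<alpha>) / (\<alpha> \<bullet> \<alpha>)) *\<^sub>R \<alpha> \<in> \<Phi>"
  using assms unfolding root_system_def refl_root_def by blast

lemma root_system_nonzero: "root_system \<Phi> \<Longrightarrow> \<alpha> \<in> \<Phi> \<Longrightarrow> \<alpha> \<noteq> 0"
  unfolding root_system_def by auto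

lemma subspace_scaleR_cancel:
  assumes "subspace H" "c *\<^sub>R x \<in> H" "c \<noteq> 0"
  shows "x \<in> H"
  using subspace_scale[OF assms(1,2), of "inverse c"] assms(3) by simp

lemma root_orthogonal_if_outside_cover:
  assumes rs: "root_system \<Phi>" and "subspace H1" "subspace H2" and cov: "\<Phi> \<subseteq> H1 \<union> H2"
    and \<alpha>: "\<alpha> \<in> \<Phi> - H1" and \<beta>: "\<beta> \<in> \<Phi> - H2"
  shows "\<alpha> \<bullet> \<beta> = 0"
proof (rule ccontr)
  assume "\<alpha> \<bullet> \<beta> \<noteq> 0"
  define c where "c = 2 * (\<beta> \<bullet> \<alpha>) / (\<alpha> \<bullet> \<alpha>)"
  have "c \<noteq> 0"
    using \<open>\<alpha> \<bullet> \<beta> \<noteq> 0\<close> root_system_nonzero[OF rs] \<alpha> by (simp add: c_def inner_commute)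
  have r: "\<beta> - c *\<^sub>R \<alpha> \<in> \<Phi>"
    using root_system_refl_root_mem[OF rs] \<alpha> \<beta> by (simp add: c_def)
  have "\<alpha> \<in> H2" "\<beta> \<in> H1" using \<alpha> \<beta> cov by auto
  show False
  proof (cases "\<beta> - c *\<^sub>R \<alpha> \<in> H1")
    case True
    then have "c *\<^sub>R \<alpha> \<in> H1"
      using subspace_diff[OF \<open>subspace H1\<close> \<open>\<beta> \<in> H1\<close>] by fastforce
    then show False using subspace_scaleR_cancel \<open>subspace H1\<close> \<open>c \<noteq> 0\<close> \<alpha> by blast
  next
    case False
    with r cov have "\<beta> - c *\<^sub>R \<alpha> \<in> H2" by auto
    then have "(\<beta> - c *\<^sub>R \<alpha>) + c *\<^sub>R \<alpha> \<in> H2"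
      by (rule subspace_add[OF \<open>subspace H2\<close>])
        (rule subspace_scale[OF \<open>subspace H2\<close> \<open>\<alpha> \<in> H2\<close>])
    then show False using \<beta> by simp
  qed
qed

lemma root_mem_span_outside_subspace:
  assumes rs: "root_system \<Phi>" and "subspace H"
    and \<alpha>: "\<alpha> \<in> \<Phi> - H" and \<gamma>: "\<gamma> \<in> \<Phi>" and "\<gamma> \<bullet> \<alpha> \<noteq> 0"
  shows "\<gamma> \<in> span (\<Phi> - H)"
proof (cases "\<gamma> \<in> H")
  case True
  define c where "c = 2 * (\<gamma> \<bullet> \<alpha>) / (\<alpha> \<bullet> \<alpha>)"
  have "c \<noteq> 0"
    using \<open>\<gamma> \<bullet> \<alpha> \<noteq> 0\<close> root_system_nonzero[OF rs] \<alpha> by (simp add: c_def)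
  have "\<gamma> - c *\<^sub>R \<alpha> \<notin> H"
  proof
    assume "\<gamma> - c *\<^sub>R \<alpha> \<in> H"
    then have "c *\<^sub>R \<alpha> \<in> H" using subspace_diff[OF \<open>subspace H\<close> True] by fastforce
    then show False using subspace_scaleR_cancel \<open>subspace H\<close> \<open>c \<noteq> 0\<close> \<alpha> by blast
  qed
  moreover have "\<gamma> - c *\<^sub>R \<alpha> \<in> \<Phi>"
    using root_system_refl_root_mem[OF rs] \<alpha> \<gamma> by (simp add: c_def)
  ultimately have "(\<gamma> - c *\<^sub>R \<alpha>) + c *\<^sub>R \<alpha> \<in> span (\<Phi> - H)"
    using \<alpha> by (intro span_add span_scale span_base) auto
  then show ?thesis by simp
qed (use \<gamma> in \<open>auto intro: span_base\<close>)

lemma irreducible_rs_subset_span: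
  assumes irr: "irreducible_rs \<Phi>" and "A \<subseteq> \<Phi>" "A \<noteq> {}"
    and closed: "\<And>\<gamma> a. \<gamma> \<in> \<Phi> \<Longrightarrow> a \<in> A \<Longrightarrow> \<gamma> \<bullet> a \<noteq> 0 \<Longrightarrow> \<gamma> \<in> span A"
  shows "\<Phi> \<subseteq> span A"
proof -
  have orth: "p \<bullet> q = 0" if "p \<in> span A" "q \<in> \<Phi> - span A" for p q
  proof -
    have "\<forall>a\<in>A. orthogonal q a" using closed that(2) by (auto simp: orthogonal_def)
    then have "orthogonal q p" using orthogonal_to_span that(1) by blast
    then show ?thesis by (simp add: orthogonal_def inner_commute)
  qed
  have "\<Phi> \<inter> span A \<noteq> {}" using \<open>A \<subseteq> \<Phi>\<close> \<open>A \<noteq> {}\<close> span_base by blast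
  have "\<Phi> - span A = {}"
  proof (rule ccontr)
    assume "\<Phi> - span A \<noteq> {}"
    with \<open>\<Phi> \<inter> span A \<noteq> {}\<close> orth have "\<exists>P Q. P \<noteq> {} \<and> Q \<noteq> {} \<and> P \<union> Q = \<Phi> \<and> P \<inter> Q = {} \<and>
        (\<forall>p\<in>P. \<forall>q\<in>Q. p \<bullet> q = 0)"
      by (intro exI[of _ "\<Phi> \<inter> span A"] exI[of _ "\<Phi> - span A"]) auto
    with irr show False unfolding irreducible_rs_def by blast
  qed
  then show ?thesis by blast
qed

theorem root_system_subset_Un_subspaces:
  assumes rs: "root_system \<Phi>" and irr: "irreducible_rs \<Phi>"
    and "subspace H1" "subspace H2" and cov: "\<Phi> \<subseteq> H1 \<union> H2"
  shows "\<Phi> \<subseteq> H1 \<or> \<Phi> \<subseteq> H2"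
proof (rule ccontr)
  assume "\<not> ?thesis"
  then obtain \<alpha> \<beta> where \<alpha>: "\<alpha> \<in> \<Phi> - H1" and \<beta>: "\<beta> \<in> \<Phi> - H2" by auto
  have "\<Phi> \<subseteq> span (\<Phi> - H1)"
    using \<alpha> by (intro irreducible_rs_subset_span[OF irr] root_mem_span_outside_subspace[OF rs])
      (auto simp: \<open>subspace H1\<close>)
  moreover have "\<forall>a\<in>\<Phi> - H1. orthogonal \<beta> a"
    using root_orthogonal_if_outside_cover[OF rs assms(3,4) cov] \<beta>
    by (simp add: orthogonal_def inner_commute)
  ultimately have "orthogonal \<beta> \<beta>" using orthogonal_to_span \<beta> by blast
  then show False using root_system_nonzero[OF rs, of \<beta>] \<beta> by (simp add: orthogonal_def)
qed

lemma plane_coordinates_unique: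
  fixes \<alpha> \<beta> :: "'a::real_vector"
  assumes "\<alpha> \<noteq> 0" "\<beta> \<notin> span {\<alpha>}"
    and eq: "x *\<^sub>R \<alpha> + y *\<^sub>R \<beta> = x' *\<^sub>R \<alpha> + y' *\<^sub>R \<beta>"
  shows "x = x' \<and> y = y'"
proof -
  have diff: "(y - y') *\<^sub>R \<beta> = (x' - x) *\<^sub>R \<alpha>" using eq by (simp add: algebra_simps)
  have "y = y'"
  proof (rule ccontr)
    assume "y \<noteq> y'"
    then have "\<beta> = ((x' - x) / (y - y')) *\<^sub>R \<alpha>"
      using arg_cong[OF diff, of "scaleR (inverse (y - y'))"] by (simp add: divide_inverse_commute)
    then show False using \<open>\<beta> \<notin> span {\<alpha>}\<close> by (metis span_base span_scale singletonI)
  qed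
  with diff \<open>\<alpha> \<noteq> 0\<close> show ?thesis by simp
qed

lemma finite_plane_max_ratio:
  fixes \<alpha> \<beta> :: "'a::real_vector"
  assumes "finite \<Phi>" "\<alpha> \<noteq> 0" "\<beta> \<notin> span {\<alpha>}" "\<beta> \<in> \<Phi>"
  obtains x y where "x *\<^sub>R \<alpha> + y *\<^sub>R \<beta> \<in> \<Phi>" "y > 0"
    "\<And>x' y'. y' > 0 \<Longrightarrow> x' *\<^sub>R \<alpha> + y' *\<^sub>R \<beta> \<in> \<Phi> \<Longrightarrow> x' / y' \<le> x / y"
proof -
  define f where "f = (\<lambda>(x, y). x *\<^sub>R \<alpha> + y *\<^sub>R \<beta>)"
  define S where "S = {p. f p \<in> \<Phi> \<and> snd p > 0}"
  have "inj_on f S"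
    using plane_coordinates_unique[OF assms(2,3)] by (auto simp: inj_on_def f_def)
  moreover have "f ` S \<subseteq> \<Phi>" by (auto simp: S_def)
  ultimately have "finite S" using \<open>finite \<Phi>\<close> finite_imageD finite_subset by blast
  moreover have "(0, 1) \<in> S" using \<open>\<beta> \<in> \<Phi>\<close> by (simp add: S_def f_def)
  ultimately have "Max ((\<lambda>(x, y). x / y) ` S) \<in> (\<lambda>(x, y). x / y) ` S"
    by (intro Max_in) auto
  then obtain x y where "(x, y) \<in> S" and max: "x / y = Max ((\<lambda>(x, y). x / y) ` S)" by auto
  show thesis
  proof
    show "x *\<^sub>R \<alpha> + y *\<^sub>R \<beta> \<in> \<Phi>" "y > 0" using \<open>(x, y) \<in> S\<close> by (auto simp: S_def f_def)
    show "x' / y' \<le> x / y" if "y' > 0" "x' *\<^sub>R \<alpha> + y' *\<^sub>R \<beta> \<in> \<Phi>" for x' y'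
      unfolding max using that \<open>finite S\<close> by (intro Max_ge) (auto simp: S_def f_def image_iff)
  qed
qed

lemma root_neighbor_in_plane:
  assumes rs: "root_system \<Phi>" and \<alpha>: "\<alpha> \<in> \<Phi>" and \<beta>: "\<beta> \<in> \<Phi>"
    and "\<beta> \<notin> span {\<alpha>}" and "\<beta> \<bullet> \<alpha> \<noteq> 0"
  obtains x y where "x *\<^sub>R \<alpha> + y *\<^sub>R \<beta> \<in> \<Phi>" "y > 0"
    "root_neighbors \<Phi> \<alpha> (x *\<^sub>R \<alpha> + y *\<^sub>R \<beta>)"
proof -
  have "\<alpha> \<noteq> 0" using root_system_nonzero[OF rs \<alpha>] .
  have "finite \<Phi>" using rs by (simp add: root_system_def)
  obtain x y where \<gamma>: "x *\<^sub>R \<alpha> + y *\<^sub>R \<beta> \<in> \<Phi>" and "y > 0"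
    and max: "\<And>x' y'. y' > 0 \<Longrightarrow> x' *\<^sub>R \<alpha> + y' *\<^sub>R \<beta> \<in> \<Phi> \<Longrightarrow> x' / y' \<le> x / y"
    by (rule finite_plane_max_ratio[OF \<open>finite \<Phi>\<close> \<open>\<alpha> \<noteq> 0\<close> \<open>\<beta> \<notin> span {\<alpha>}\<close> \<beta>])
      (rule that)
  define \<gamma> where "\<gamma> = x *\<^sub>R \<alpha> + y *\<^sub>R \<beta>"
  have "\<gamma> \<notin> span {\<alpha>}"
  proof
    assume "\<gamma> \<in> span {\<alpha>}"
    then have "y *\<^sub>R \<beta> \<in> span {\<alpha>}"
      using span_diff[of \<gamma> "{\<alpha>}" "x *\<^sub>R \<alpha>"] by (simp add: \<gamma>_def span_base span_scale)
    then show False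
      using subspace_scaleR_cancel[OF subspace_span] \<open>y > 0\<close> \<open>\<beta> \<notin> span {\<alpha>}\<close> by force
  qed
  then have indep: "independent {\<alpha>, \<gamma>}" and "\<alpha> \<noteq> \<gamma>"
    using \<open>\<alpha> \<noteq> 0\<close> span_base[of \<alpha> "{\<alpha>}"]
    by (auto simp: insert_commute[of \<alpha> \<gamma>] independent_insert)
  have "\<alpha> \<bullet> \<gamma> \<noteq> 0"
  proof
    assume "\<alpha> \<bullet> \<gamma> = 0"
    define k where "k = 2 * (\<beta> \<bullet> \<alpha>) / (\<alpha> \<bullet> \<alpha>)"
    have "x * (\<alpha> \<bullet> \<alpha>) + y * (\<beta> \<bullet> \<alpha>) = 0"
      using \<open>\<alpha> \<bullet> \<gamma> = 0\<close> by (simp add: \<gamma>_def inner_add_right inner_commute)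
    then have ratio: "x / y = - k / 2"
      using \<open>y > 0\<close> \<open>\<alpha> \<noteq> 0\<close> by (simp add: k_def field_simps)
    \<comment> \<open>both \<open>\<beta>\<close> and \<open>s\<^sub>\<alpha> \<beta> = \<beta> - k\<alpha>\<close> compete in the maximum, forcing \<open>k = 0\<close>\<close>
    have "0 / 1 \<le> x / y" using max[of 1 0] \<beta> by simp
    moreover have "(- k) / 1 \<le> x / y"
      using max[of 1 "- k"] root_system_refl_root_mem[OF rs \<alpha> \<beta>] by (simp add: k_def)
    ultimately have "k = 0" unfolding ratio by simp
    then show False using \<open>\<beta> \<bullet> \<alpha> \<noteq> 0\<close> \<open>\<alpha> \<noteq> 0\<close> by (simp add: k_def)
  qed
  have cone: "\<not> (\<exists>\<delta>\<in>\<Phi>. \<exists>a b. a > 0 \<and> b > 0 \<and> \<delta> = a *\<^sub>R \<alpha> + b *\<^sub>R \<gamma>)"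
  proof
    assume "\<exists>\<delta>\<in>\<Phi>. \<exists>a b. a > 0 \<and> b > 0 \<and> \<delta> = a *\<^sub>R \<alpha> + b *\<^sub>R \<gamma>"
    then obtain a b where "a > 0" "b > 0" "a *\<^sub>R \<alpha> + b *\<^sub>R \<gamma> \<in> \<Phi>" by auto
    moreover have "a *\<^sub>R \<alpha> + b *\<^sub>R \<gamma> = (a + b * x) *\<^sub>R \<alpha> + (b * y) *\<^sub>R \<beta>"
      by (simp add: \<gamma>_def algebra_simps)
    ultimately have "(a + b * x) / (b * y) \<le> x / y" using max \<open>y > 0\<close> by simp
    then have "a * y \<le> 0" using \<open>b > 0\<close> \<open>y > 0\<close> by (simp add: field_simps)
    then show False using mult_pos_pos[OF \<open>a > 0\<close> \<open>y > 0\<close>] by linarith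
  qed
  show thesis
    using that[OF \<gamma> \<open>y > 0\<close>] \<open>\<alpha> \<noteq> \<gamma>\<close> indep \<open>\<alpha> \<bullet> \<gamma> \<noteq> 0\<close> cone
    by (simp add: root_neighbors_def \<gamma>_def)
qed

theorem root_neighbor_outside_subspace:
  assumes rs: "root_system \<Phi>" and irr: "irreducible_rs \<Phi>"
    and "subspace H" "\<not> \<Phi> \<subseteq> H" and \<alpha>: "\<alpha> \<in> \<Phi> \<inter> H"
  shows "\<exists>\<gamma>\<in>\<Phi> - H. root_neighbors \<Phi> \<alpha> \<gamma>"
proof -
  have "\<not> \<Phi> \<subseteq> {v. v \<bullet> \<alpha> = 0}" using \<alpha> root_system_nonzero[OF rs] by auto
  then obtain \<beta> where \<beta>: "\<beta> \<in> \<Phi>" "\<beta> \<notin> H" "\<beta> \<bullet> \<alpha> \<noteq> 0"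
    using root_system_subset_Un_subspaces[OF rs irr \<open>subspace H\<close> subspace_hyperplane2]
      \<open>\<not> \<Phi> \<subseteq> H\<close> by blast
  have "span {\<alpha>} \<subseteq> H" using \<alpha> \<open>subspace H\<close> by (simp add: span_minimal)
  then obtain x y where \<gamma>: "x *\<^sub>R \<alpha> + y *\<^sub>R \<beta> \<in> \<Phi>" and "y > 0"
    and nb: "root_neighbors \<Phi> \<alpha> (x *\<^sub>R \<alpha> + y *\<^sub>R \<beta>)"
    using root_neighbor_in_plane[OF rs _ \<beta>(1) _ \<beta>(3)] \<alpha> \<beta>(2) by blast
  have "x *\<^sub>R \<alpha> + y *\<^sub>R \<beta> \<notin> H"
  proof
    assume "x *\<^sub>R \<alpha> + y *\<^sub>R \<beta> \<in> H"
    then have "y *\<^sub>R \<beta> \<in> H"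
      using subspace_diff[OF \<open>subspace H\<close> _ subspace_scale[OF \<open>subspace H\<close>], of _ \<alpha> x] \<alpha>
      by fastforce
    then show False using subspace_scaleR_cancel \<open>subspace H\<close> \<open>y > 0\<close> \<beta>(2) by force
  qed
  with \<gamma> nb show ?thesis by blast
qed

lemma hyperplane_of_span_not_superset:
  assumes "hyperplane_of (span \<Phi>) H"
  shows "\<not> \<Phi> \<subseteq> H"
proof
  assume "\<Phi> \<subseteq> H"
  then have "span \<Phi> \<subseteq> H" using assms span_minimal by (auto simp: hyperplane_of_def)
  then have "dim (span \<Phi>) \<le> dim H" by (rule dim_subset)
  with assms show False by (simp add: hyperplane_of_def)
qed

theorem lemma1:
  fixes \<Phi> :: "'a::euclidean_space set"
  assumes "root_system \<Phi>" and "irreducible_rs \<Phi>"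
  shows "(\<forall>H1 H2. hyperplane_of (span \<Phi>) H1 \<and> hyperplane_of (span \<Phi>) H2
              \<longrightarrow> \<not> \<Phi> \<subseteq> H1 \<union> H2)
       \<and> (\<forall>H \<alpha>. hyperplane_of (span \<Phi>) H \<and> \<alpha> \<in> \<Phi> \<inter> H
              \<longrightarrow> (\<exists>\<beta>\<in>\<Phi> - H. root_neighbors \<Phi> \<alpha> \<beta>))"
proof (intro conjI allI impI)
  fix H1 H2
  assume H: "hyperplane_of (span \<Phi>) H1 \<and> hyperplane_of (span \<Phi>) H2"
  then have "\<not> \<Phi> \<subseteq> H1" "\<not> \<Phi> \<subseteq> H2" using hyperplane_of_span_not_superset by blast+
  with H show "\<not> \<Phi> \<subseteq> H1 \<union> H2"
    using root_system_subset_Un_subspaces[OF assms] unfolding hyperplane_of_def by blast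
next
  fix H \<alpha>
  assume H: "hyperplane_of (span \<Phi>) H \<and> \<alpha> \<in> \<Phi> \<inter> H"
  then have "\<not> \<Phi> \<subseteq> H" using hyperplane_of_span_not_superset by blast
  with H show "\<exists>\<beta>\<in>\<Phi> - H. root_neighbors \<Phi> \<alpha> \<beta>"
    using root_neighbor_outside_subspace[OF assms] unfolding hyperplane_of_def by blast
qed

end
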